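(* For every positive integer $d$ there is a convex lattice polytope in $\mathbb{R}^d$ (all vertices in $\mathbb{Z}^d$) with at least $2d$ vertices, containing no point of $\mathbb{Z}^d$ in its interior, all of whose facets are simplices. *)

theory Defs
  imports "HOL-Analysis.Analysis"
begin

definition lattice_point :: "real ^ 'n \<Rightarrow> bool" where
  "lattice_point x \<longleftrightarrow> (\<forall>i. x $ i \<in> \<int>)"

end

(* The polytope is the convex hull of d antipodal pairs c + b, c - b of vertices of the unit
   cube, where c is the centre of the cube and the half-diagonals b are linearly independent:
   an affine image of the standard cross-polytope. Each point c + b or c - b is exposed by a
   linear functional dual to b, so these 2d points are exactly the vertices. A face containing
   an antipodal pair contains c, which lies in the open segment of every pair, so it is the
   whole polytope; hence a facet is the hull of at most one vertex from each pair, an affinely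
   independent set, i.e. a simplex. Since the polytope lies in the unit cube, its interior
   contains no lattice point. *)
theory Submission
  imports Defs
begin

lemma independent_image_scaleR:
  fixes B :: "'a::real_vector set"
  assumes indep: "independent B" and nonzero: "\<And>b. b \<in> B \<Longrightarrow> s b \<noteq> 0"
  shows "independent ((\<lambda>b. s b *\<^sub>R b) ` B)"
proof
  assume "dependent ((\<lambda>b. s b *\<^sub>R b) ` B)"
  then obtain b where b: "b \<in> B"
    and in_span: "s b *\<^sub>R b \<in> span ((\<lambda>b. s b *\<^sub>R b) ` B - {s b *\<^sub>R b})"
    by (auto simp: dependent_def)
  have "(\<lambda>b. s b *\<^sub>R b) ` B - {s b *\<^sub>R b} \<subseteq> span (B - {b})"
    by (auto intro: span_mul span_base)
  then have "s b *\<^sub>R b \<in> span (B - {b})"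
    using in_span span_minimal[OF _ subspace_span] by blast
  then have "b \<in> span (B - {b})"
    using span_mul[of "s b *\<^sub>R b" _ "inverse (s b)"] nonzero[OF b] by simp
  then show False
    using indep b by (auto simp: dependent_def)
qed

definition cross_polytope_vertices :: "'a::real_vector \<Rightarrow> 'a set \<Rightarrow> 'a set" where
  "cross_polytope_vertices c B = (\<lambda>b. c + b) ` B \<union> (\<lambda>b. c - b) ` B"

lemma midpoint_add_diff [simp]: "midpoint (c + b) (c - b) = c"
  by (simp add: midpoint_def scaleR_2 flip: scaleR_add_right)

lemma centre_in_convex_hull:
  fixes c b :: "'a::real_vector"
  assumes "c + b \<in> S" and "c - b \<in> S"
  shows "c \<in> convex hull S"
proof -
  have "c \<in> closed_segment (c + b) (c - b)"
    using midpoint_in_closed_segment[of "c + b" "c - b"] by simp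
  also have "\<dots> \<subseteq> convex hull S"
    using assms by (simp add: closed_segment_subset_convex_hull hull_inc)
  finally show ?thesis .
qed

context
  fixes c :: "'a::euclidean_space" and B :: "'a set"
  assumes B_independent: "independent B"
begin

lemma finite_cross_polytope_vertices: "finite (cross_polytope_vertices c B)"
  using finiteI_independent[OF B_independent] by (simp add: cross_polytope_vertices_def)

lemma uminus_notin_independent: "b \<in> B \<Longrightarrow> - b \<notin> B"
proof
  assume b: "b \<in> B" and minus_b: "- b \<in> B"
  have "b \<noteq> 0"
    using b B_independent dependent_zero by blast
  have "- b \<noteq> b"
  proof
    assume "- b = b"
    then have "2 *\<^sub>R b = 0"
      by (metis add.right_inverse scaleR_2)
    then show False
      using \<open>b \<noteq> 0\<close> by simp
  qed
  then have "b \<in> span (B - {b})"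
    using span_neg[OF span_base[of "- b" "B - {b}"]] minus_b by simp
  then show False
    using B_independent b by (auto simp: dependent_def)
qed

lemma card_cross_polytope_vertices: "card (cross_polytope_vertices c B) = 2 * card B"
proof -
  have "c + b \<noteq> c - b'" if "b \<in> B" "b' \<in> B" for b b'
  proof
    assume "c + b = c - b'"
    then have "b' = - b"
      by (metis add_left_cancel diff_conv_add_uminus minus_minus)
    then show False
      using that uminus_notin_independent by blast
  qed
  then have "(\<lambda>b. c + b) ` B \<inter> (\<lambda>b. c - b) ` B = {}"
    by blast
  then have "card (cross_polytope_vertices c B) = card ((\<lambda>b. c + b) ` B) + card ((\<lambda>b. c - b) ` B)"
    unfolding cross_polytope_vertices_def
    using finiteI_independent[OF B_independent] by (simp add: card_Un_disjoint)
  also have "\<dots> = 2 * card B"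
    by (simp add: card_image inj_on_def)
  finally show ?thesis .
qed

lemma independent_dual_functional:
  assumes b: "b \<in> B"
  obtains a where "0 < a \<bullet> b" and "\<And>b'. b' \<in> B - {b} \<Longrightarrow> a \<bullet> b' = 0"
proof -
  obtain y z where y: "y \<in> span (B - {b})"
    and z: "\<And>x. x \<in> span (B - {b}) \<Longrightarrow> orthogonal z x" and b_eq: "b = y + z"
    using orthogonal_subspace_decomp_exists[of "B - {b}" b] by blast
  have "z \<noteq> 0"
  proof
    assume "z = 0"
    then have "b \<in> span (B - {b})"
      using b_eq y by simp
    then show False
      using B_independent b unfolding dependent_def by blast
  qed
  moreover have "z \<bullet> b = z \<bullet> z"
    using z[OF y] b_eq by (simp add: orthogonal_def inner_add_right)
  ultimately have "0 < z \<bullet> b"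
    by simp
  moreover have "z \<bullet> b' = 0" if "b' \<in> B - {b}" for b'
    using z[OF span_base[OF that]] by (simp add: orthogonal_def)
  ultimately show thesis
    using that by blast
qed

lemma cross_polytope_vertex_exposed:
  assumes "v \<in> cross_polytope_vertices c B"
  obtains a where "\<And>x. x \<in> cross_polytope_vertices c B - {v} \<Longrightarrow> a \<bullet> x < a \<bullet> v"
proof -
  obtain b where b: "b \<in> B" and v: "v = c + b \<or> v = c - b"
    using assms by (auto simp: cross_polytope_vertices_def)
  obtain a where ab: "0 < a \<bullet> b" and a0: "\<And>b'. b' \<in> B - {b} \<Longrightarrow> a \<bullet> b' = 0"
    using independent_dual_functional[OF b] by blast
  have off_axis: "a \<bullet> x = a \<bullet> c"
    if x: "x \<in> cross_polytope_vertices c B" and "x \<noteq> c + b" and "x \<noteq> c - b" for x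
  proof -
    obtain b' where b': "b' \<in> B" "x = c + b' \<or> x = c - b'"
      using x by (auto simp: cross_polytope_vertices_def)
    then have "b' \<noteq> b"
      using that by auto
    then show ?thesis
      using a0 b' by (auto simp: inner_add_right inner_diff_right)
  qed
  from v show thesis
  proof
    assume v: "v = c + b"
    show thesis
    proof (rule that)
      fix x assume "x \<in> cross_polytope_vertices c B - {v}"
      then show "a \<bullet> x < a \<bullet> v"
        using off_axis[of x] ab v by (cases "x = c - b") (auto simp: inner_add_right inner_diff_right)
    qed
  next
    assume v: "v = c - b"
    show thesis
    proof (rule that)
      fix x assume "x \<in> cross_polytope_vertices c B - {v}"
      then show "- a \<bullet> x < - a \<bullet> v"
        using off_axis[of x] ab v by (cases "x = c + b") (auto simp: inner_add_right inner_diff_right)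
    qed
  qed
qed

lemma extreme_point_of_cross_polytope_iff:
  "v extreme_point_of convex hull (cross_polytope_vertices c B) \<longleftrightarrow> v \<in> cross_polytope_vertices c B"
proof (rule extreme_point_of_convex_hull_convex_independent)
  show "compact (cross_polytope_vertices c B)"
    by (rule finite_imp_compact[OF finite_cross_polytope_vertices])
next
  fix u assume "u \<in> cross_polytope_vertices c B"
  then obtain a where a: "\<And>x. x \<in> cross_polytope_vertices c B - {u} \<Longrightarrow> a \<bullet> x < a \<bullet> u"
    using cross_polytope_vertex_exposed by blast
  have "convex hull (cross_polytope_vertices c B - {u}) \<subseteq> {x. a \<bullet> x < a \<bullet> u}"
    using a by (intro hull_minimal convex_halfspace_lt) auto
  then show "u \<notin> convex hull (cross_polytope_vertices c B - {u})"
    by auto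
qed

lemma centre_in_open_segment:
  assumes b: "b \<in> B"
  shows "c \<in> open_segment (c + b) (c - b)"
proof -
  have "c + b \<noteq> c - b"
  proof
    assume "c + b = c - b"
    then have "- b = b"
      by (metis add_left_cancel diff_conv_add_uminus)
    then show False
      using b uminus_notin_independent by metis
  qed
  then show ?thesis
    using midpoint_in_open_segment[of "c + b" "c - b"] by simp
qed

lemma face_of_cross_polytope_containing_centre:
  assumes F: "F face_of convex hull (cross_polytope_vertices c B)" and "c \<in> F"
  shows "F = convex hull (cross_polytope_vertices c B)"
proof
  show "F \<subseteq> convex hull (cross_polytope_vertices c B)"
    using F by (rule face_of_imp_subset)
  have "c + b \<in> F \<and> c - b \<in> F" if "b \<in> B" for b
  proof -
    have "c + b \<in> convex hull (cross_polytope_vertices c B)"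
      and "c - b \<in> convex hull (cross_polytope_vertices c B)"
      using that by (auto simp: cross_polytope_vertices_def intro!: hull_inc)
    then show ?thesis
      using face_ofD[OF F centre_in_open_segment[OF that]] \<open>c \<in> F\<close> by blast
  qed
  then have "cross_polytope_vertices c B \<subseteq> F"
    by (auto simp: cross_polytope_vertices_def)
  then show "convex hull (cross_polytope_vertices c B) \<subseteq> F"
    using F face_of_imp_convex hull_minimal by blast
qed

lemma affine_independent_cross_polytope_transversal:
  assumes S: "S \<subseteq> cross_polytope_vertices c B"
    and no_pair: "\<And>b. b \<in> B \<Longrightarrow> \<not> (c + b \<in> S \<and> c - b \<in> S)"
  shows "\<not> affine_dependent S"
proof -
  define s :: "'a \<Rightarrow> real" where "s b = (if c + b \<in> S then 1 else -1)" for b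
  define B' where "B' = {b \<in> B. c + b \<in> S \<or> c - b \<in> S}"
  have "S = (\<lambda>b. c + s b *\<^sub>R b) ` B'"
  proof (intro equalityI subsetI)
    fix v assume v: "v \<in> S"
    then obtain b where b: "b \<in> B" and "v = c + b \<or> v = c - b"
      using S by (auto simp: cross_polytope_vertices_def)
    then have "b \<in> B' \<and> v = c + s b *\<^sub>R b"
      using v no_pair[OF b] by (auto simp: B'_def s_def)
    then show "v \<in> (\<lambda>b. c + s b *\<^sub>R b) ` B'"
      by blast
  next
    fix v assume "v \<in> (\<lambda>b. c + s b *\<^sub>R b) ` B'"
    then show "v \<in> S"
      by (auto simp: B'_def s_def)
  qed
  then have "S = (\<lambda>x. c + x) ` (\<lambda>b. s b *\<^sub>R b) ` B'"
    by (simp add: image_image)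
  moreover have "independent ((\<lambda>b. s b *\<^sub>R b) ` B')"
  proof (rule independent_image_scaleR)
    show "independent B'"
      by (rule independent_mono[OF B_independent]) (auto simp: B'_def)
  qed (simp add: s_def)
  ultimately show ?thesis
    using affine_dependent_imp_dependent affine_dependent_translation_eq[of _ c] by blast
qed

lemma proper_face_of_cross_polytope_simplex:
  assumes F: "F face_of convex hull (cross_polytope_vertices c B)"
    and proper: "F \<noteq> convex hull (cross_polytope_vertices c B)"
  shows "\<exists>n. n simplex F"
proof -
  obtain S where S: "S \<subseteq> cross_polytope_vertices c B" and F_eq: "F = convex hull S"
    using face_of_convex_hull_subset[OF finite_imp_compact[OF finite_cross_polytope_vertices] F] .
  have "\<not> (c + b \<in> S \<and> c - b \<in> S)" if "b \<in> B" for b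
  proof
    assume "c + b \<in> S \<and> c - b \<in> S"
    then have "c \<in> F"
      unfolding F_eq by (auto intro: centre_in_convex_hull)
    then show False
      using face_of_cross_polytope_containing_centre[OF F] proper by blast
  qed
  then have "\<not> affine_dependent S"
    using affine_independent_cross_polytope_transversal[OF S] by blast
  then show ?thesis
    using simplex_convex_hull[of S "int (card S) - 1"] F_eq by auto
qed

lemma facet_of_cross_polytope_simplex:
  assumes "F facet_of convex hull (cross_polytope_vertices c B)"
  shows "\<exists>n. n simplex F"
  using assms proper_face_of_cross_polytope_simplex facet_of_imp_face_of facet_of_irrefl by blast

lemma aff_dim_cross_polytope:
  assumes "B \<noteq> {}"
  shows "aff_dim (convex hull (cross_polytope_vertices c B)) = card B"
proof -
  obtain b where b: "b \<in> B"
    using assms by blast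
  have "c \<in> convex hull (cross_polytope_vertices c B)"
    using b by (intro centre_in_convex_hull[of c b]) (auto simp: cross_polytope_vertices_def)
  then have "c \<in> affine hull (cross_polytope_vertices c B)"
    using convex_hull_subset_affine_hull by blast
  then have "aff_dim (cross_polytope_vertices c B) = dim ((+) (- c) ` cross_polytope_vertices c B)"
    by (rule aff_dim_eq_dim)
  also have "(+) (- c) ` cross_polytope_vertices c B = B \<union> uminus ` B"
    by (force simp: cross_polytope_vertices_def image_image)
  also have "dim (B \<union> uminus ` B) = dim B"
  proof -
    have "span (B \<union> uminus ` B) = span B"
      by (auto simp: span_eq intro: span_base span_neg)
    then show ?thesis
      by (metis dim_span)
  qed
  also have "dim B = card B"
    by (rule dim_eq_card_independent[OF B_independent])
  finally show ?thesis
    by (simp add: aff_dim_convex_hull)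
qed

end

(* Using 0 rather than e_j as the j-th corner keeps the half-diagonals independent: the
   vectors e_i - c are linearly dependent in dimension 2. *)
definition simplex_corner :: "'n::finite \<Rightarrow> 'n \<Rightarrow> real^'n" where
  "simplex_corner j i = (if i = j then 0 else axis i 1)"

definition corner_directions :: "'n::finite \<Rightarrow> (real^'n) set" where
  "corner_directions j = (\<lambda>i. simplex_corner j i - (1/2) *\<^sub>R 1) ` UNIV"

lemma inj_simplex_corner: "inj (simplex_corner j)"
  by (rule injI) (auto simp: simplex_corner_def axis_eq_axis split: if_splits)

lemma span_corner_directions: "span (corner_directions j) = UNIV"
proof -
  let ?S = "span (corner_directions j)"
  have "- (simplex_corner j j - (1/2) *\<^sub>R 1) \<in> ?S"
    by (intro span_neg span_base) (simp add: corner_directions_def)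
  then have half: "(1/2) *\<^sub>R 1 \<in> ?S"
    by (simp add: simplex_corner_def)
  have corner: "simplex_corner j i \<in> ?S" for i
  proof -
    have "(simplex_corner j i - (1/2) *\<^sub>R 1) + (1/2) *\<^sub>R 1 \<in> ?S"
      by (intro span_add half span_base) (simp add: corner_directions_def)
    then show ?thesis
      by simp
  qed
  have one: "1 \<in> ?S"
    using span_mul[OF half, of 2] by simp
  have other_axis: "axis i 1 \<in> ?S" if "i \<noteq> j" for i
    using corner[of i] that by (simp add: simplex_corner_def)
  have "axis j 1 + (\<Sum>i\<in>UNIV - {j}. axis i 1) = (\<Sum>i\<in>UNIV. axis i (1::real))"
    by (rule sum.remove[symmetric]) simp_all
  also have "\<dots> = 1"
    using basis_expansion[of "1 :: real^'n"] by (simp add: vector_smult_lid)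
  finally have "axis j (1::real) = 1 - (\<Sum>i\<in>UNIV - {j}. axis i 1)"
    by (rule eq_diff_eq[THEN iffD2])
  moreover have "(\<Sum>i\<in>UNIV - {j}. axis i 1) \<in> ?S"
    using other_axis by (intro span_sum) simp
  ultimately have "axis j 1 \<in> ?S"
    using one by (simp add: span_diff)
  then have "axis i 1 \<in> ?S" for i
    using other_axis by (cases "i = j") simp_all
  then have "Basis \<subseteq> ?S"
    by (auto simp: Basis_vec_def)
  then show ?thesis
    using span_Basis span_minimal[OF _ subspace_span] by blast
qed

lemma card_corner_directions: "card (corner_directions j :: (real^'n::finite) set) = CARD('n)"
  unfolding corner_directions_def
  by (subst card_image) (auto simp: inj_on_def dest: injD[OF inj_simplex_corner])

lemma independent_corner_directions: "independent (corner_directions j)"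
proof (rule card_le_dim_spanning[where V = UNIV])
  show "finite (corner_directions j)"
    by (simp add: corner_directions_def)
qed (simp_all add: span_corner_directions card_corner_directions)

abbreviation unit_cube_cross_vertices :: "'n::finite \<Rightarrow> (real^'n) set" where
  "unit_cube_cross_vertices j \<equiv> cross_polytope_vertices ((1/2) *\<^sub>R 1) (corner_directions j)"

lemma unit_cube_cross_vertex_nth:
  assumes "v \<in> unit_cube_cross_vertices j"
  shows "v $ k = 0 \<or> v $ k = 1"
  using assms
  by (auto simp: cross_polytope_vertices_def corner_directions_def simplex_corner_def axis_def
      split: if_splits)

lemma lattice_point_unit_cube_cross_vertex:
  "v \<in> unit_cube_cross_vertices j \<Longrightarrow> lattice_point v"
  unfolding lattice_point_def by (metis unit_cube_cross_vertex_nth Ints_0 Ints_1)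

lemma convex_hull_unit_cube_cross_vertices_subset:
  "convex hull (unit_cube_cross_vertices j) \<subseteq> cbox 0 1"
proof (rule hull_minimal)
  show "unit_cube_cross_vertices j \<subseteq> cbox 0 1"
  proof
    fix v assume "v \<in> unit_cube_cross_vertices j"
    then have "0 \<le> v $ k \<and> v $ k \<le> 1" for k
      using unit_cube_cross_vertex_nth[of v j k] by auto
    then show "v \<in> cbox 0 1"
      by (simp add: mem_box_cart)
  qed
qed (rule convex_box)

lemma not_lattice_point_in_unit_box:
  fixes x :: "real^'n"
  assumes "x \<in> box 0 1"
  shows "\<not> lattice_point x"
proof
  assume "lattice_point x"
  then obtain z where "x $ undefined = of_int z"
    unfolding lattice_point_def by (meson Ints_cases)
  moreover have "0 < x $ undefined" and "x $ undefined < 1"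
    using assms by (simp_all add: mem_box_cart)
  ultimately show False
    by simp
qed

lemma not_lattice_point_interior_unit_cube_cross_polytope:
  assumes "x \<in> interior (convex hull (unit_cube_cross_vertices j))"
  shows "\<not> lattice_point x"
  using assms interior_mono[OF convex_hull_unit_cube_cross_vertices_subset] interior_cbox
    not_lattice_point_in_unit_box by blast

theorem proposition16:
  shows "\<exists>P :: (real ^ 'n) set.
           polytope P \<and> aff_dim P = int CARD('n) \<and>
           (\<forall>v. v extreme_point_of P \<longrightarrow> lattice_point v) \<and>
           card {v. v extreme_point_of P} \<ge> 2 * CARD('n) \<and>
           (\<forall>x \<in> interior P. \<not> lattice_point x) \<and>
           (\<forall>F. F facet_of P \<longrightarrow> (\<exists>k. k simplex F))"
proof -
  let ?V = "unit_cube_cross_vertices (undefined :: 'n)"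
  note indep = independent_corner_directions[of "undefined :: 'n"]
  have extreme_points: "{v. v extreme_point_of convex hull ?V} = ?V"
    using extreme_point_of_cross_polytope_iff[OF indep] by blast
  have "corner_directions (undefined :: 'n) \<noteq> {}"
    by (simp add: corner_directions_def)
  show ?thesis
  proof (intro exI[of _ "convex hull ?V"] conjI allI impI ballI)
    show "polytope (convex hull ?V)"
      by (rule polytope_convex_hull[OF finite_cross_polytope_vertices[OF indep]])
    show "aff_dim (convex hull ?V) = int CARD('n)"
      using aff_dim_cross_polytope[OF indep] card_corner_directions \<open>_ \<noteq> {}\<close> by simp
    show "lattice_point v" if "v extreme_point_of convex hull ?V" for v
      using that extreme_points lattice_point_unit_cube_cross_vertex by blast
    show "2 * CARD('n) \<le> card {v. v extreme_point_of convex hull ?V}"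
      unfolding extreme_points card_cross_polytope_vertices[OF indep] card_corner_directions ..
    show "\<not> lattice_point x" if "x \<in> interior (convex hull ?V)" for x
      using that by (rule not_lattice_point_interior_unit_cube_cross_polytope)
    show "\<exists>k. k simplex F" if "F facet_of convex hull ?V" for F
      using that by (rule facet_of_cross_polytope_simplex[OF indep])
  qed
qed

end
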